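(* Let $\alpha$ be a proper action of a locally compact group $G$ on a commutative $C^*$-algebra $A=C_\infty(M)$, $M$ a locally compact Hausdorff space (so $\alpha$ comes from an action on $M$ with $(\alpha_xf)(m)=f(\alpha_x^{-1}(m))$), and let $M/\alpha$ be the orbit space with its quotient topology, which is locally compact Hausdorff. Then for all $f,g\in\mathcal P_\alpha$ the element $\psi_\alpha(\bar f g)\in C_b(M)$ is $\alpha$-invariant and, viewed as a function on $M/\alpha$, belongs to $C_\infty(M/\alpha)$.
   Context: $G$ has a fixed left Haar measure. $\mathcal B$ is the set of $\lambda\in L^\infty(G)$ with compact support and $0\le\lambda\le 1$, directed pointwise; $p_\lambda(a)=\int_G\lambda(x)\alpha_x(a)\,dx$. An element $a\in A^+$ is $\alpha$-proper if $(p_\lambda(a))_{\lambda\in\mathcal B}$ converges in the strict topology of $M(A)=C_b(M)$; $\mathcal P_\alpha$ is the linear span of the $\alpha$-proper elements (a $*$-subalgebra of $A$), and $\alpha$ is proper if $\mathcal P_\alpha$ is dense. For $a\in\mathcal P_\alpha$, $\psi_\alpha(a)\in M(A)$ denotes the strict limit of $(p_\lambda(a))_{\lambda\in\mathcal B}$. *)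

theory Defs
  imports "HOL-Analysis.Analysis"
begin

definition C0_on :: "'a topology \<Rightarrow> ('a \<Rightarrow> complex) set" where
  "C0_on X = {f. continuous_map X euclidean f \<and>
      (\<forall>e>0. \<exists>K. compactin X K \<and> (\<forall>y\<in>topspace X - K. norm (f y) < e))}"

definition C0 :: "('m::topological_space \<Rightarrow> complex) set" where
  "C0 = C0_on euclidean"

definition Cb :: "('m::topological_space \<Rightarrow> complex) set" where
  "Cb = {h. continuous_on UNIV h \<and> (\<exists>B. \<forall>m. norm (h m) \<le> B)}"

text \<open>The group G is a type of class topological_group_add (group_add is NOT assumed
  commutative, + is the group law, 0 the unit, uminus the inverse).\<close>

definition left_haar_measure :: "'g::{topological_group_add,t2_space} measure \<Rightarrow> bool" where
  "left_haar_measure \<mu> \<longleftrightarrow>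
     sets \<mu> = sets borel \<and>
     (\<forall>E\<in>sets borel. \<forall>x. emeasure \<mu> ((\<lambda>y. x + y) ` E) = emeasure \<mu> E) \<and>
     (\<forall>K. compact K \<longrightarrow> emeasure \<mu> K < \<infinity>) \<and>
     (\<forall>U. open U \<and> U \<noteq> {} \<longrightarrow> emeasure \<mu> U > 0) \<and>
     (\<forall>E\<in>sets borel. emeasure \<mu> E = (INF U\<in>{U. open U \<and> E \<subseteq> U}. emeasure \<mu> U)) \<and>
     (\<forall>U. open U \<longrightarrow> emeasure \<mu> U = (SUP K\<in>{K. compact K \<and> K \<subseteq> U}. emeasure \<mu> K))"

definition continuous_action :: "('g::topological_group_add \<Rightarrow> 'm::topological_space \<Rightarrow> 'm) \<Rightarrow> bool" where
  "continuous_action act \<longleftrightarrow>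
     (\<forall>m. act 0 m = m) \<and> (\<forall>x y m. act (x + y) m = act x (act y m)) \<and>
     continuous_on UNIV (\<lambda>(x, m). act x m)"

definition alpha :: "('g::group_add \<Rightarrow> 'm \<Rightarrow> 'm) \<Rightarrow> 'g \<Rightarrow> ('m \<Rightarrow> complex) \<Rightarrow> ('m \<Rightarrow> complex)" where
  "alpha act x f = (\<lambda>m. f (act (- x) m))"

text \<open>The index set B: (representatives of) L-infinity functions with compact support and
  values in [0,1], directed by the pointwise order.\<close>

definition Bset :: "('g::topological_space \<Rightarrow> real) set" where
  "Bset = {l. l \<in> borel_measurable borel \<and> (\<forall>x. 0 \<le> l x \<and> l x \<le> 1) \<and>
              (\<exists>K. compact K \<and> (\<forall>x. x \<notin> K \<longrightarrow> l x = 0))}"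

text \<open>p_lambda(a) = integral of lambda(x) alpha_x(a) dx; the A-valued (Bochner) integral is
  evaluated pointwise at each m (evaluation at m is a bounded linear functional on A).\<close>

definition p_lam :: "'g::topological_group_add measure \<Rightarrow> ('g \<Rightarrow> 'm \<Rightarrow> 'm) \<Rightarrow>
     ('g \<Rightarrow> real) \<Rightarrow> ('m \<Rightarrow> complex) \<Rightarrow> ('m \<Rightarrow> complex)" where
  "p_lam \<mu> act l a = (\<lambda>m. LINT x|\<mu>. complex_of_real (l x) * alpha act x a m)"

text \<open>Convergence of a net indexed by Bset (directed pointwise) in the strict topology of
  M(A) = C_b(M), A = C_0(M) commutative: h_l \<rightarrow> h iff \<parallel>(h_l - h) a\<parallel>_\<infinity> \<rightarrow> 0 for all a in A.\<close>

definition strict_conv :: "(('g::topological_space \<Rightarrow> real) \<Rightarrow> ('m::topological_space \<Rightarrow> complex)) \<Rightarrow> ('m \<Rightarrow> complex) \<Rightarrow> bool" where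
  "strict_conv net h \<longleftrightarrow>
     (\<forall>a\<in>C0. \<forall>e>0. \<exists>l0\<in>Bset. \<forall>l\<in>Bset. (\<forall>x. l0 x \<le> l x) \<longrightarrow>
        (\<forall>m. norm ((net l m - h m) * a m) \<le> e))"

definition alpha_proper_elt :: "'g::{topological_group_add,t2_space} measure \<Rightarrow> ('g \<Rightarrow> 'm \<Rightarrow> 'm) \<Rightarrow>
     ('m::topological_space \<Rightarrow> complex) \<Rightarrow> bool" where
  "alpha_proper_elt \<mu> act a \<longleftrightarrow>
     a \<in> C0 \<and> (\<forall>m. a m \<in> \<real> \<and> Re (a m) \<ge> 0) \<and>
     (\<exists>h\<in>Cb. strict_conv (\<lambda>l. p_lam \<mu> act l a) h)"

definition P_alpha :: "'g::{topological_group_add,t2_space} measure \<Rightarrow> ('g \<Rightarrow> 'm \<Rightarrow> 'm) \<Rightarrow>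
     ('m::topological_space \<Rightarrow> complex) set" where
  "P_alpha \<mu> act = {f. \<exists>n::nat. \<exists>c a. (\<forall>i<n. alpha_proper_elt \<mu> act (a i)) \<and>
                        f = (\<lambda>m. \<Sum>i<n. c i * a i m)}"

definition proper_action :: "'g::{topological_group_add,t2_space} measure \<Rightarrow> ('g \<Rightarrow> 'm::topological_space \<Rightarrow> 'm) \<Rightarrow> bool" where
  "proper_action \<mu> act \<longleftrightarrow>
     (\<forall>a\<in>C0. \<forall>e>0. \<exists>f\<in>P_alpha \<mu> act. \<forall>m::'m. norm (a m - f m) < e)"

definition psi_alpha :: "'g::{topological_group_add,t2_space} measure \<Rightarrow> ('g \<Rightarrow> 'm \<Rightarrow> 'm) \<Rightarrow>
     ('m::topological_space \<Rightarrow> complex) \<Rightarrow> ('m \<Rightarrow> complex)" where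
  "psi_alpha \<mu> act a = (THE h. h \<in> Cb \<and> strict_conv (\<lambda>l. p_lam \<mu> act l a) h)"

definition orbit :: "('g \<Rightarrow> 'm \<Rightarrow> 'm) \<Rightarrow> 'm \<Rightarrow> 'm set" where
  "orbit act m = range (\<lambda>x. act x m)"

definition orbit_space :: "('g \<Rightarrow> 'm::topological_space \<Rightarrow> 'm) \<Rightarrow> 'm set topology" where
  "orbit_space act = topology (\<lambda>U. U \<subseteq> range (orbit act) \<and> open {m. orbit act m \<in> U})"

text \<open>An alpha-invariant function h on M, viewed as a function on M/alpha.\<close>

definition on_orbits :: "('m \<Rightarrow> complex) \<Rightarrow> 'm set \<Rightarrow> complex" where
  "on_orbits h Orb = h (SOME m. m \<in> Orb)"

definition alpha_invariant :: "('g::group_add \<Rightarrow> 'm \<Rightarrow> 'm) \<Rightarrow> ('m \<Rightarrow> complex) \<Rightarrow> bool" where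
  "alpha_invariant act h \<longleftrightarrow> (\<forall>x. alpha act x h = h)"

end

(* For the positive generators a, b of P_alpha, 0 <= a b <= |b|_oo a pointwise. The nets
   p_lambda(a b) and p_lambda(|b|_oo a) are increasing in lambda, and the strict convergence of the
   larger one forces that of the smaller one (the gap to the limit is dominated), so psi(a b)
   exists; it is continuous as a locally uniform limit of continuous functions and bounded by
   |b|_oo psi(a). Off the saturation of the compact set {a >= delta} we have a < delta along whole
   orbits, hence psi(a b) <= delta psi(b) there: psi(a b) vanishes at infinity on M/alpha.
   Translating lambda shows that strict limits of p_lambda are alpha-invariant, and sesquilinearity
   extends everything from the products a b to conj f * g. *)

theory Submission
  imports Defs
begin

section \<open>Directed nets\<close>

definition directed_net :: "'a::order set \<Rightarrow> 'a filter" where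
  "directed_net B = (INF b\<in>B. principal {l\<in>B. b \<le> l})"

definition directed :: "'a::order set \<Rightarrow> bool" where
  "directed B \<longleftrightarrow> B \<noteq> {} \<and> (\<forall>a\<in>B. \<forall>b\<in>B. \<exists>c\<in>B. a \<le> c \<and> b \<le> c)"

lemma eventually_directed_net:
  assumes "directed B"
  shows "eventually P (directed_net B) \<longleftrightarrow> (\<exists>b\<in>B. \<forall>l\<in>B. b \<le> l \<longrightarrow> P l)"
proof -
  have "B \<noteq> {}" using assms unfolding directed_def by simp
  moreover have "\<exists>c\<in>B. principal {l \<in> B. c \<le> l} \<le> inf (principal {l \<in> B. a \<le> l}) (principal {l \<in> B. b \<le> l})"
    if ab: "a \<in> B" "b \<in> B" for a b
  proof -
    obtain c where "c \<in> B" "a \<le> c" "b \<le> c" using assms ab unfolding directed_def by blast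
    then have "{l \<in> B. c \<le> l} \<subseteq> {l \<in> B. a \<le> l} \<inter> {l \<in> B. b \<le> l}" by (auto intro: order.trans)
    then show ?thesis using \<open>c \<in> B\<close> by (auto simp: inf_principal)
  qed
  ultimately show ?thesis
    unfolding directed_net_def by (subst eventually_INF_base) (auto simp: eventually_principal)
qed

lemma eventually_in_directed_net: "directed B \<Longrightarrow> eventually (\<lambda>l. l \<in> B) (directed_net B)"
  by (auto simp: eventually_directed_net directed_def)

lemma directed_net_neq_bot: "directed B \<Longrightarrow> directed_net B \<noteq> bot"
  by (auto simp: trivial_limit_def eventually_directed_net directed_def)

lemma le_limit_of_mono_on:
  fixes f :: "'a::order \<Rightarrow> real"
  assumes "directed B" "mono_on B f" "(f \<longlongrightarrow> L) (directed_net B)" "b \<in> B"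
  shows "f b \<le> L"
proof (rule tendsto_lowerbound[OF assms(3) _ directed_net_neq_bot[OF assms(1)]])
  show "eventually (\<lambda>l. f b \<le> f l) (directed_net B)"
    using assms(1,2,4) unfolding eventually_directed_net[OF assms(1)] by (auto dest: mono_onD)
qed

lemma SUP_bounds_of_mono_on_sum:
  fixes P Q :: "'a::order \<Rightarrow> real"
  assumes B: "directed B" and mono: "mono_on B P" "mono_on B Q"
    and lim: "((\<lambda>l. P l + Q l) \<longlongrightarrow> L) (directed_net B)" and b: "b \<in> B"
  shows "P b \<le> (SUP l\<in>B. P l)" "(SUP l\<in>B. P l) \<le> L - Q b"
proof -
  have sum_le: "P l + Q l \<le> L" if "l \<in> B" for l
    using mono by (intro le_limit_of_mono_on[OF B _ lim that]) (auto simp: mono_on_def intro: add_mono)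
  have P_le: "P l \<le> L - Q b" if "l \<in> B" for l
  proof -
    obtain c where "c \<in> B" "l \<le> c" "b \<le> c" using B \<open>l \<in> B\<close> b unfolding directed_def by blast
    then show ?thesis using sum_le[of c] mono_onD[OF mono(1)] mono_onD[OF mono(2)] \<open>l \<in> B\<close> b
      by fastforce
  qed
  then have "bdd_above (P ` B)" by (rule bdd_aboveI2)
  then show "P b \<le> (SUP l\<in>B. P l)" using b by (rule cSUP_upper2) simp
  show "(SUP l\<in>B. P l) \<le> L - Q b"
    using P_le B by (intro cSUP_least) (auto simp: directed_def)
qed

lemma C0_iff:
  "u \<in> C0 \<longleftrightarrow> continuous_on UNIV u \<and> (\<forall>e>0. \<exists>K. compact K \<and> (\<forall>m. m \<notin> K \<longrightarrow> norm (u m) < e))"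
  unfolding C0_def C0_on_def continuous_map_iff_continuous2 compactin_euclidean_iff by (simp add: Ball_def)

lemma C0_imp_Cb:
  assumes "u \<in> C0" shows "u \<in> Cb"
proof -
  obtain K where K: "compact K" "\<forall>m. m \<notin> K \<longrightarrow> norm (u m) < 1" and cont: "continuous_on UNIV u"
    using assms unfolding C0_iff by (meson zero_less_one)
  have "compact (u ` K)" by (rule compact_continuous_image[OF continuous_on_subset[OF cont] K(1)]) auto
  then obtain B where B: "\<forall>z\<in>u ` K. norm z \<le> B" using compact_imp_bounded bounded_iff by metis
  have "norm (u m) \<le> max B 1" for m
    using B K(2) by (cases "m \<in> K") (auto simp: le_max_iff_disj less_imp_le)
  then show ?thesis using cont unfolding Cb_def by blast
qed

lemma Cb_bound:
  assumes "h \<in> Cb" obtains B where "B \<ge> 0" "\<And>m. norm (h m) \<le> B"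
proof -
  obtain B where B: "\<forall>m. norm (h m) \<le> B" using assms unfolding Cb_def by blast
  then have "B \<ge> 0" using norm_ge_zero[of "h undefined"] by (blast intro: order_trans)
  then show thesis using B that by blast
qed

lemma Cb_linear_combination:
  assumes "h1 \<in> Cb" "h2 \<in> Cb" shows "(\<lambda>m. c * h1 m + h2 m) \<in> Cb"
proof -
  obtain B1 B2 where B: "\<forall>m. norm (h1 m) \<le> B1" "\<forall>m. norm (h2 m) \<le> B2"
    using assms unfolding Cb_def by blast
  have "norm (c * h1 m + h2 m) \<le> norm c * B1 + B2" for m
  proof -
    have "norm (c * h1 m + h2 m) \<le> norm c * norm (h1 m) + norm (h2 m)"
      by (metis norm_mult norm_triangle_ineq)
    also have "\<dots> \<le> norm c * B1 + B2" using B by (intro add_mono mult_left_mono) auto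
    finally show ?thesis .
  qed
  moreover have "continuous_on UNIV (\<lambda>m. c * h1 m + h2 m)"
    using assms unfolding Cb_def by (intro continuous_intros) auto
  ultimately show ?thesis unfolding Cb_def by blast
qed

lemma Cb_mult:
  assumes "h1 \<in> Cb" "h2 \<in> Cb" shows "(\<lambda>m. h1 m * h2 m) \<in> Cb"
proof -
  obtain B1 where B1: "B1 \<ge> 0" "\<And>m. norm (h1 m) \<le> B1" using Cb_bound[OF assms(1)] by blast
  obtain B2 where B2: "\<forall>m. norm (h2 m) \<le> B2" using assms(2) unfolding Cb_def by blast
  have "norm (h1 m * h2 m) \<le> B1 * B2" for m
    unfolding norm_mult using B1 B2 by (intro mult_mono') auto
  moreover have "continuous_on UNIV (\<lambda>m. h1 m * h2 m)"
    using assms unfolding Cb_def by (intro continuous_intros) auto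
  ultimately show ?thesis unfolding Cb_def by blast
qed

lemma exists_C0_eq_1:
  fixes m0 :: "'m::t2_space"
  assumes "locally_compact_space (euclidean :: 'm topology)"
  shows "\<exists>a\<in>C0. a m0 = 1"
proof -
  obtain U K where UK: "open U" "compact K" "m0 \<in> U" "U \<subseteq> K"
    using assms unfolding locally_compact_space_def compactin_euclidean_iff
    by (auto simp: open_openin[symmetric]) blast
  have "Hausdorff_space (euclidean :: 'm topology)"
    unfolding Hausdorff_space_def by (metis disjnt_def hausdorff open_openin)
  then have "completely_regular_space (euclidean :: 'm topology)"
    using locally_compact_regular_imp_completely_regular_space[OF assms] by blast
  moreover have "closedin euclidean (- U)" using UK(1)
    by (simp add: closed_closedin[symmetric] closed_Compl)
  moreover have "m0 \<in> topspace euclidean - (- U)" using UK(3) by simp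
  ultimately obtain f :: "'m \<Rightarrow> real" where
    f: "continuous_map euclidean (top_of_set {0..1}) f" "f m0 = 0" "f ` (- U) \<subseteq> {1}"
    unfolding completely_regular_space_def by blast
  define a where "a = (\<lambda>m. complex_of_real (1 - f m))"
  have "continuous_on UNIV a" unfolding a_def using f(1)
    by (intro continuous_intros) (simp add: continuous_map_in_subtopology continuous_map_iff_continuous2)
  moreover have "\<forall>m. m \<notin> K \<longrightarrow> a m = 0" using f(3) UK(4) unfolding a_def by auto
  ultimately have "a \<in> C0" unfolding C0_iff using UK(2) by auto
  moreover have "a m0 = 1" using f(2) by (simp add: a_def)
  ultimately show ?thesis by blast
qed

lemma Bset_sup: "l1 \<in> Bset \<Longrightarrow> l2 \<in> Bset \<Longrightarrow> sup l1 l2 \<in> Bset"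
proof -
  assume l: "l1 \<in> Bset" "l2 \<in> Bset"
  then obtain K1 K2 where "compact K1" "\<forall>x. x \<notin> K1 \<longrightarrow> l1 x = 0" "compact K2" "\<forall>x. x \<notin> K2 \<longrightarrow> l2 x = 0"
    unfolding Bset_def by blast
  then show "sup l1 l2 \<in> Bset" using l unfolding Bset_def sup_fun_def
    by (auto intro!: exI[of _ "K1 \<union> K2"] borel_measurable_max simp: sup_real_def le_max_iff_disj)
qed

lemma zero_in_Bset: "(\<lambda>x. 0) \<in> Bset"
  unfolding Bset_def by (auto intro!: exI[of _ "{}"])

lemma directed_Bset: "directed Bset"
  unfolding directed_def using zero_in_Bset Bset_sup by (metis empty_iff sup_ge1 sup_ge2)

lemma eventually_Bset_net:
  "eventually P (directed_net Bset) \<longleftrightarrow> (\<exists>l0\<in>Bset. \<forall>l\<in>Bset. l0 \<le> l \<longrightarrow> P l)"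
  by (rule eventually_directed_net[OF directed_Bset])

lemma Bset_translate:
  fixes l :: "'g::topological_group_add \<Rightarrow> real"
  assumes "l \<in> Bset" shows "(\<lambda>z. l (y + z)) \<in> Bset"
proof -
  obtain K where K: "compact K" "\<forall>x. x \<notin> K \<longrightarrow> l x = 0" and meas: "l \<in> borel_measurable borel"
    and bounds: "\<forall>x. 0 \<le> l x \<and> l x \<le> 1"
    using assms unfolding Bset_def by blast
  have "compact ((\<lambda>w. - y + w) ` K)"
    by (intro compact_continuous_image K(1) continuous_intros)
  moreover have "z \<in> (\<lambda>w. - y + w) ` K" if "l (y + z) \<noteq> 0" for z
    using K(2) that by (intro image_eqI[of _ _ "y + z"]) (auto simp: add.assoc[symmetric])
  moreover have "(\<lambda>z. l (y + z)) \<in> borel_measurable borel"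
    by (intro measurable_compose[OF borel_measurable_continuous_onI meas] continuous_intros)
  ultimately show ?thesis using bounds unfolding Bset_def by blast
qed

section \<open>The net p_lambda\<close>

lemma continuous_on_act_minus:
  fixes act :: "'g::topological_group_add \<Rightarrow> 'm::topological_space \<Rightarrow> 'm"
  assumes "continuous_action act"
  shows "continuous_on UNIV (\<lambda>p. act (- fst p) (snd p))"
proof -
  have "continuous_on UNIV (\<lambda>(x, m). act x m)" using assms unfolding continuous_action_def by blast
  then have "continuous_on UNIV (\<lambda>p. act (fst p) (snd p))" by (simp add: case_prod_beta')
  moreover have "continuous_on UNIV (\<lambda>p::'g \<times> 'm. (- fst p, snd p))" by (intro continuous_intros)
  ultimately show ?thesis using continuous_on_compose2 by fastforce
qed

lemma continuous_on_comp_act_minus: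
  assumes "continuous_action act" "continuous_on UNIV u"
  shows "continuous_on UNIV (\<lambda>x. u (act (- x) m))"
proof -
  have "continuous_on UNIV (\<lambda>x. (x, m))" by (intro continuous_intros)
  from continuous_on_compose2[OF continuous_on_act_minus[OF assms(1)] this]
  have "continuous_on UNIV (\<lambda>x. act (- x) m)" by simp
  from continuous_on_compose2[OF assms(2) this] show ?thesis by simp
qed

lemma act_add_minus:
  assumes "continuous_action act"
  shows "act (- (y + x)) m = act (- x) (act (- y) m)"
proof -
  have "act (- x + - y) m = act (- x) (act (- y) m)" using assms unfolding continuous_action_def by blast
  then show ?thesis by (simp only: minus_add)
qed

lemma left_haar_measure_sets: "left_haar_measure \<mu> \<Longrightarrow> sets \<mu> = sets borel"
  unfolding left_haar_measure_def by (elim conjE)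

lemma left_haar_measure_compact_finite: "left_haar_measure \<mu> \<Longrightarrow> compact K \<Longrightarrow> emeasure \<mu> K < \<infinity>"
  unfolding left_haar_measure_def by (elim conjE) (erule allE, erule mp)

lemma emeasure_left_haar_measure_translate:
  "left_haar_measure \<mu> \<Longrightarrow> E \<in> sets borel \<Longrightarrow> emeasure \<mu> ((\<lambda>y. x + y) ` E) = emeasure \<mu> E"
  unfolding left_haar_measure_def by (elim conjE) (erule ballE, erule allE, assumption, simp)

lemma distr_left_haar_measure_translate:
  fixes \<mu> :: "'g::{topological_group_add,t2_space} measure"
  assumes haar: "left_haar_measure \<mu>"
  shows "distr \<mu> \<mu> (\<lambda>x. y + x) = \<mu>" "(\<lambda>x. y + x) \<in> measurable \<mu> \<mu>"
proof -
  have sets: "sets \<mu> = sets borel" by (rule left_haar_measure_sets[OF haar])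
  show meas: "(\<lambda>x. y + x) \<in> measurable \<mu> \<mu>"
    unfolding measurable_cong_sets[OF sets sets]
    by (intro borel_measurable_continuous_onI continuous_intros)
  show "distr \<mu> \<mu> (\<lambda>x. y + x) = \<mu>"
  proof (rule measure_eqI)
    fix A assume "A \<in> sets (distr \<mu> \<mu> (\<lambda>x. y + x))"
    then have A: "A \<in> sets borel" using sets by simp
    have "(\<lambda>x. y + x) -` A \<inter> space \<mu> = (\<lambda>w. - y + w) ` A"
      using sets_eq_imp_space_eq[OF sets]
      by (auto simp: image_iff add.assoc[symmetric] intro!: bexI[of _ "y + x" for x])
    then show "emeasure (distr \<mu> \<mu> (\<lambda>x. y + x)) A = emeasure \<mu> A"
      using emeasure_left_haar_measure_translate[OF haar A] by (simp add: emeasure_distr[OF meas] A sets)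
  qed simp
qed

lemma integral_left_haar_measure_translate:
  fixes \<mu> :: "'g::{topological_group_add,t2_space} measure" and F :: "'g \<Rightarrow> 'b::{banach,second_countable_topology}"
  assumes haar: "left_haar_measure \<mu>" and meas: "F \<in> borel_measurable borel"
  shows "(LINT x|\<mu>. F (y + x)) = (LINT x|\<mu>. F x)"
proof -
  have "F \<in> borel_measurable \<mu>"
    using meas measurable_cong_sets[OF left_haar_measure_sets[OF haar] refl] by blast
  then have "(LINT x|\<mu>. F (y + x)) = (LINT x|distr \<mu> \<mu> (\<lambda>x. y + x). F x)"
    by (rule integral_distr[OF distr_left_haar_measure_translate(2)[OF haar], symmetric])
  then show ?thesis using distr_left_haar_measure_translate(1)[OF haar] by simp
qed

lemma integrable_Bset_mult:
  fixes \<mu> :: "'g::{topological_group_add,t2_space} measure" and F :: "'g \<Rightarrow> complex"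
  assumes haar: "left_haar_measure \<mu>" and l: "l \<in> Bset"
    and F: "continuous_on UNIV F" "\<And>x. norm (F x) \<le> B"
  shows "integrable \<mu> (\<lambda>x. complex_of_real (l x) * F x)"
proof -
  obtain K where K: "compact K" "\<forall>x. x \<notin> K \<longrightarrow> l x = 0" and meas: "l \<in> borel_measurable borel"
    and bounds: "\<forall>x. 0 \<le> l x \<and> l x \<le> 1"
    using l unfolding Bset_def by blast
  have sets: "sets \<mu> = sets borel" by (rule left_haar_measure_sets[OF haar])
  have "K \<in> sets \<mu>" using sets K(1) by (simp add: borel_closed compact_imp_closed)
  then have int: "integrable \<mu> (\<lambda>x. B * indicator K x)"
    using integrable_real_indicator left_haar_measure_compact_finite[OF haar K(1)] by simp
  have meas': "(\<lambda>x. complex_of_real (l x) * F x) \<in> borel_measurable \<mu>"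
    unfolding measurable_cong_sets[OF sets refl]
    using meas borel_measurable_continuous_onI[OF F(1)] by measurable
  have "norm (complex_of_real (l x) * F x) \<le> B * indicator K x" for x
    using K(2) bounds F(2)[of x]
    by (cases "x \<in> K") (auto simp: norm_mult intro: mult_le_one order_trans[OF mult_left_le_one_le])
  then show ?thesis
    by (intro Bochner_Integration.integrable_bound[OF int meas']) (auto intro: order_trans[OF _ abs_ge_self])
qed

lemma integrable_p_lam_integrand:
  fixes \<mu> :: "'g::{topological_group_add,t2_space} measure" and u :: "'m::topological_space \<Rightarrow> complex"
  assumes "left_haar_measure \<mu>" "continuous_action act" "l \<in> Bset" "u \<in> Cb"
  shows "integrable \<mu> (\<lambda>x. complex_of_real (l x) * u (act (- x) m))"
proof -
  obtain B where "\<And>m. norm (u m) \<le> B" using Cb_bound[OF assms(4)] by blast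
  moreover have "continuous_on UNIV u" using assms(4) unfolding Cb_def by blast
  ultimately show ?thesis
    by (intro integrable_Bset_mult[OF assms(1,3) continuous_on_comp_act_minus[OF assms(2)]])
qed

lemma p_lam_linear_combination:
  fixes \<mu> :: "'g::{topological_group_add,t2_space} measure" and u v :: "'m::topological_space \<Rightarrow> complex"
  assumes "left_haar_measure \<mu>" "continuous_action act" "l \<in> Bset" "u \<in> Cb" "v \<in> Cb"
  shows "p_lam \<mu> act l (\<lambda>m. c * u m + v m) m = c * p_lam \<mu> act l u m + p_lam \<mu> act l v m"
proof -
  have "(\<lambda>x. complex_of_real (l x) * (c * u (act (- x) m) + v (act (- x) m)))
      = (\<lambda>x. c * (complex_of_real (l x) * u (act (- x) m)) + complex_of_real (l x) * v (act (- x) m))"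
    by (auto simp: algebra_simps)
  then show ?thesis unfolding p_lam_def alpha_def
    using integrable_p_lam_integrand[OF assms(1-3)] assms(4,5) by simp
qed

lemma p_lam_of_real:
  "p_lam \<mu> act l (\<lambda>m. complex_of_real (U m)) m = complex_of_real (LINT x|\<mu>. l x * U (act (- x) m))"
  unfolding p_lam_def alpha_def by (simp only: of_real_mult[symmetric] integral_complex_of_real)

lemma integrable_p_lam_integrand_real:
  fixes \<mu> :: "'g::{topological_group_add,t2_space} measure" and U :: "'m::topological_space \<Rightarrow> real"
  assumes "left_haar_measure \<mu>" "continuous_action act" "l \<in> Bset" "(\<lambda>m. complex_of_real (U m)) \<in> Cb"
  shows "integrable \<mu> (\<lambda>x. l x * U (act (- x) m))"
  using integrable_p_lam_integrand[OF assms, of m] complex_of_real_integrable_eq by fastforce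

lemma mono_on_Bset_integral:
  fixes \<mu> :: "'g::{topological_group_add,t2_space} measure" and U :: "'m::topological_space \<Rightarrow> real"
  assumes "left_haar_measure \<mu>" "continuous_action act" "(\<lambda>m. complex_of_real (U m)) \<in> Cb"
    and "\<And>m. 0 \<le> U m"
  shows "mono_on Bset (\<lambda>l. LINT x|\<mu>. l x * U (act (- x) m))"
  using integrable_p_lam_integrand_real[OF assms(1,2) _ assms(3)] assms(4)
  by (intro mono_onI integral_mono) (auto simp: le_fun_def intro: mult_right_mono)

lemma continuous_on_p_lam:
  fixes \<mu> :: "'g::{topological_group_add,t2_space} measure" and u :: "'m::t2_space \<Rightarrow> complex"
  assumes haar: "left_haar_measure \<mu>" and act: "continuous_action act" and l: "l \<in> Bset"
    and u: "u \<in> Cb"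
  shows "continuous_on UNIV (p_lam \<mu> act l u)"
proof -
  obtain K where K: "compact K" "\<forall>x. x \<notin> K \<longrightarrow> l x = 0" and bounds: "\<forall>x. 0 \<le> l x \<and> l x \<le> 1"
    using l unfolding Bset_def by blast
  have K_sets: "K \<in> sets \<mu>"
    using left_haar_measure_sets[OF haar] K(1) by (simp add: borel_closed compact_imp_closed)
  have K_finite: "emeasure \<mu> K < \<infinity>" by (rule left_haar_measure_compact_finite[OF haar K(1)])
  have cont: "continuous_on UNIV (\<lambda>p::'g \<times> 'm. u (act (- fst p) (snd p)))"
    using continuous_on_compose2[OF _ continuous_on_act_minus[OF act]] u unfolding Cb_def by fastforce
  have "isCont (p_lam \<mu> act l u) m0" for m0
    unfolding isCont_def tendsto_iff eventually_at_topological
  proof (intro allI impI)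
    fix e :: real assume "0 < e"
    define d where "d = e / (measure \<mu> K + 1)"
    have "0 < measure \<mu> K + 1" by (simp add: add_nonneg_pos)
    then have d: "0 < d" "d * measure \<mu> K < e"
      unfolding d_def using \<open>0 < e\<close> by (simp_all add: field_simps)
    txt \<open>By the tube lemma, the integrands at \<open>m\<close> and \<open>m0\<close> are uniformly \<open>d\<close>-close on \<open>K\<close>
      for \<open>m\<close> in a neighbourhood of \<open>m0\<close>.\<close>
    define W where "W = {p::'m \<times> 'g. dist (u (act (- snd p) (fst p))) (u (act (- snd p) m0)) < d}"
    have "continuous_on UNIV (\<lambda>p::'m \<times> 'g. (snd p, fst p))" "continuous_on UNIV (\<lambda>p::'m \<times> 'g. (snd p, m0))"
      by (intro continuous_intros)+
    from this[THEN continuous_on_compose2[OF cont]] have "open W" unfolding W_def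
      by (intro open_Collect_less continuous_on_dist continuous_on_const) auto
    moreover have "{m0} \<times> K \<subseteq> W" unfolding W_def using d by auto
    ultimately obtain X where X: "m0 \<in> X" "open X" "X \<times> K \<subseteq> W"
      using Elementary_Topology.tube_lemma[OF K(1)] by metis
    have "dist (p_lam \<mu> act l u m) (p_lam \<mu> act l u m0) < e" if "m \<in> X" for m
    proof -
      have bound: "norm (complex_of_real (l x) * u (act (- x) m) - complex_of_real (l x) * u (act (- x) m0))
          \<le> d * indicator K x" for x
      proof (cases "x \<in> K")
        case True
        then have "norm (u (act (- x) m) - u (act (- x) m0)) < d"
          using X(3) \<open>m \<in> X\<close> unfolding W_def by (auto simp: dist_norm)
        then show ?thesis using True bounds
          by (simp add: right_diff_distrib[symmetric] norm_mult mult_le_one order_trans[OF mult_left_le_one_le])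
      qed (use K(2) in simp)
      have "dist (p_lam \<mu> act l u m) (p_lam \<mu> act l u m0)
          = norm (LINT x|\<mu>. complex_of_real (l x) * u (act (- x) m) - complex_of_real (l x) * u (act (- x) m0))"
        unfolding p_lam_def alpha_def dist_norm
        using integrable_p_lam_integrand[OF haar act l u] by simp
      also have "\<dots> \<le> (LINT x|\<mu>. norm (complex_of_real (l x) * u (act (- x) m)
          - complex_of_real (l x) * u (act (- x) m0)))"
        by (rule integral_norm_bound)
      also have "\<dots> \<le> (LINT x|\<mu>. d * indicator K x)"
        using integrable_p_lam_integrand[OF haar act l u] integrable_real_indicator[OF K_sets K_finite] bound
        by (intro integral_mono) auto
      also have "\<dots> = d * measure \<mu> K" using K_sets K_finite by simp
      finally show ?thesis using d by linarith
    qed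
    then show "\<exists>S. open S \<and> m0 \<in> S \<and> (\<forall>m\<in>S. m \<noteq> m0 \<longrightarrow> m \<in> UNIV \<longrightarrow>
        dist (p_lam \<mu> act l u m) (p_lam \<mu> act l u m0) < e)"
      using X by blast
  qed
  then show ?thesis by (simp add: continuous_at_imp_continuous_on)
qed

lemma p_lam_act:
  fixes \<mu> :: "'g::{topological_group_add,t2_space} measure" and act :: "'g \<Rightarrow> 'm::topological_space \<Rightarrow> 'm"
  assumes haar: "left_haar_measure \<mu>" and act: "continuous_action act" and l: "l \<in> Bset"
    and u: "continuous_on UNIV u"
  shows "p_lam \<mu> act l u (act (- y) m) = p_lam \<mu> act (\<lambda>z. l (- y + z)) u m"
proof -
  define F where "F = (\<lambda>z. complex_of_real (l (- y + z)) * u (act (- z) m))"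
  have "(\<lambda>z. l (- y + z)) \<in> borel_measurable borel" using Bset_translate[OF l] unfolding Bset_def by blast
  then have "F \<in> borel_measurable borel"
    unfolding F_def using borel_measurable_continuous_onI[OF continuous_on_comp_act_minus[OF act u]]
    by measurable
  moreover have "F (y + x) = complex_of_real (l x) * u (act (- x) (act (- y) m))" for x
    by (simp add: F_def act_add_minus[OF act] add.assoc[symmetric])
  ultimately have "(LINT x|\<mu>. complex_of_real (l x) * u (act (- x) (act (- y) m))) = (LINT x|\<mu>. F x)"
    using integral_left_haar_measure_translate[OF haar, of F y] by simp
  then show ?thesis unfolding p_lam_def alpha_def F_def .
qed

section \<open>Strict convergence\<close>

lemma strict_conv_iff_uniform_limit:
  "strict_conv net h \<longleftrightarrow>
    (\<forall>a\<in>C0. uniform_limit UNIV (\<lambda>l m. net l m * a m) (\<lambda>m. h m * a m) (directed_net Bset))"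
proof -
  have le_iff_less: "(\<forall>e>0. \<exists>l0\<in>Bset. \<forall>l\<in>Bset. (\<forall>x. l0 x \<le> l x) \<longrightarrow> (\<forall>m. D l m \<le> e)) \<longleftrightarrow>
        (\<forall>e>0. \<exists>l0\<in>Bset. \<forall>l\<in>Bset. (\<forall>x. l0 x \<le> l x) \<longrightarrow> (\<forall>m. D l m < e))" for D :: "_ \<Rightarrow> 'm \<Rightarrow> real"
  proof safe
    fix e :: real
    assume "0 < e" and le: "\<forall>e>0. \<exists>l0\<in>Bset. \<forall>l\<in>Bset. (\<forall>x. l0 x \<le> l x) \<longrightarrow> (\<forall>m. D l m \<le> e)"
    obtain l0 where "l0 \<in> Bset" "\<forall>l\<in>Bset. (\<forall>x. l0 x \<le> l x) \<longrightarrow> (\<forall>m. D l m \<le> e / 2)"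
      using le[rule_format, OF half_gt_zero[OF \<open>0 < e\<close>]] by blast
    moreover have "e / 2 < e" using \<open>0 < e\<close> by simp
    ultimately show "\<exists>l0\<in>Bset. \<forall>l\<in>Bset. (\<forall>x. l0 x \<le> l x) \<longrightarrow> (\<forall>m. D l m < e)"
      by (blast intro: le_less_trans)
  qed (meson less_imp_le)
  show ?thesis
    unfolding strict_conv_def uniform_limit_iff eventually_Bset_net dist_norm le_fun_def
    by (simp add: left_diff_distrib[symmetric] le_iff_less)
qed

lemma strict_conv_tendsto:
  fixes h :: "'m::t2_space \<Rightarrow> complex"
  assumes "locally_compact_space (euclidean :: 'm topology)" "strict_conv net h"
  shows "((\<lambda>l. net l m) \<longlongrightarrow> h m) (directed_net Bset)"
proof -
  obtain a where a: "a \<in> C0" "a m = 1" using exists_C0_eq_1[OF assms(1)] by blast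
  then have "uniform_limit UNIV (\<lambda>l m. net l m * a m) (\<lambda>m. h m * a m) (directed_net Bset)"
    using assms(2) unfolding strict_conv_iff_uniform_limit by blast
  from tendsto_uniform_limitI[OF this UNIV_I[of m]] show ?thesis using a(2) by simp
qed

lemma strict_conv_unique:
  fixes h1 h2 :: "'m::t2_space \<Rightarrow> complex"
  assumes "locally_compact_space (euclidean :: 'm topology)" "strict_conv net h1" "strict_conv net h2"
  shows "h1 = h2"
  using tendsto_unique[OF directed_net_neq_bot[OF directed_Bset] strict_conv_tendsto[OF assms(1,2)]
      strict_conv_tendsto[OF assms(1,3)]] by blast

lemma strict_conv_cong:
  "(\<And>l m. l \<in> Bset \<Longrightarrow> n1 l m = n2 l m) \<Longrightarrow> strict_conv n1 h = strict_conv n2 h"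
  unfolding strict_conv_def by auto

lemma strict_conv_linear_combination:
  fixes n1 n2 :: "('g::topological_space \<Rightarrow> real) \<Rightarrow> 'm::topological_space \<Rightarrow> complex"
  assumes "strict_conv n1 h1" "strict_conv n2 h2"
  shows "strict_conv (\<lambda>l m. c * n1 l m + n2 l m) (\<lambda>m. c * h1 m + h2 m)"
  unfolding strict_conv_iff_uniform_limit
proof
  fix a :: "'m \<Rightarrow> complex" assume "a \<in> C0"
  then have "uniform_limit UNIV (\<lambda>l m. c * (n1 l m * a m) + n2 l m * a m) (\<lambda>m. c * (h1 m * a m) + h2 m * a m)
      (directed_net Bset)"
    using assms unfolding strict_conv_iff_uniform_limit
    by (intro uniform_limit_add bounded_linear.uniform_limit[OF bounded_linear_mult_right]) auto
  then show "uniform_limit UNIV (\<lambda>l m. (c * n1 l m + n2 l m) * a m) (\<lambda>m. (c * h1 m + h2 m) * a m)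
      (directed_net Bset)"
    by (simp add: algebra_simps)
qed

lemma strict_conv_dominated:
  fixes n1 n2 :: "('g::topological_space \<Rightarrow> real) \<Rightarrow> 'm::topological_space \<Rightarrow> complex"
  assumes "strict_conv n1 h1" "\<And>l m. l \<in> Bset \<Longrightarrow> norm (n2 l m - h2 m) \<le> norm (n1 l m - h1 m)"
  shows "strict_conv n2 h2"
  unfolding strict_conv_def
proof (intro ballI allI impI)
  fix a :: "'m \<Rightarrow> complex" and e :: real assume "a \<in> C0" "0 < e"
  then obtain l0 where "l0 \<in> Bset" "\<forall>l\<in>Bset. (\<forall>x. l0 x \<le> l x) \<longrightarrow> (\<forall>m. norm ((n1 l m - h1 m) * a m) \<le> e)"
    using assms(1) unfolding strict_conv_def by blast
  moreover have "norm ((n2 l m - h2 m) * a m) \<le> norm ((n1 l m - h1 m) * a m)" if "l \<in> Bset" for l m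
    unfolding norm_mult using assms(2)[OF that] by (rule mult_right_mono) simp
  ultimately show "\<exists>l0\<in>Bset. \<forall>l\<in>Bset. (\<forall>x. l0 x \<le> l x) \<longrightarrow> (\<forall>m. norm ((n2 l m - h2 m) * a m) \<le> e)"
    by (meson order_trans)
qed

lemma continuous_on_strict_limit:
  fixes h :: "'m::t2_space \<Rightarrow> complex"
  assumes "locally_compact_space (euclidean :: 'm topology)" "strict_conv net h"
    and "\<And>l. l \<in> Bset \<Longrightarrow> continuous_on UNIV (net l)"
  shows "continuous_on UNIV h"
proof -
  have "isCont h m0" for m0
  proof -
    obtain a where a: "a \<in> C0" "a m0 = 1" using exists_C0_eq_1[OF assms(1)] by blast
    have cont_a: "continuous_on UNIV a" using a(1) unfolding C0_iff by blast
    txt \<open>On \<open>W\<close>, \<open>h = (h a) / a\<close> is a uniform limit of continuous functions.\<close>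
    define W where "W = {m. a m \<noteq> 0}"
    have "open W" unfolding W_def by (intro open_Collect_neq cont_a continuous_on_const)
    have "uniform_limit UNIV (\<lambda>l m. net l m * a m) (\<lambda>m. h m * a m) (directed_net Bset)"
      using assms(2) a(1) unfolding strict_conv_iff_uniform_limit by blast
    then have limit: "uniform_limit W (\<lambda>l m. net l m * a m) (\<lambda>m. h m * a m) (directed_net Bset)"
      by (rule uniform_limit_on_subset) simp
    have cont_a_W: "continuous_on W a" using cont_a by (rule continuous_on_subset) simp
    have "continuous_on W (\<lambda>m. net l m * a m)" if "l \<in> Bset" for l
      by (intro continuous_on_mult cont_a_W continuous_on_subset[OF assms(3)[OF that]]) simp
    then have "eventually (\<lambda>l. continuous_on W (\<lambda>m. net l m * a m)) (directed_net Bset)"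
      using eventually_in_directed_net[OF directed_Bset] by (rule eventually_mono[rotated])
    then have "continuous_on W (\<lambda>m. h m * a m)"
      by (rule uniform_limit_theorem[OF _ limit directed_net_neq_bot[OF directed_Bset]])
    then have "continuous_on W (\<lambda>m. h m * a m / a m)"
      using cont_a_W by (intro continuous_on_divide) (auto simp: W_def)
    moreover have "continuous_on W h \<longleftrightarrow> continuous_on W (\<lambda>m. h m * a m / a m)"
      by (intro continuous_on_cong) (auto simp: W_def)
    ultimately have "continuous_on W h" by blast
    then show ?thesis using \<open>open W\<close> a(2) by (simp add: W_def continuous_on_eq_continuous_at)
  qed
  then show ?thesis by (simp add: continuous_at_imp_continuous_on)
qed

lemma filterlim_Bset_translate:
  "filterlim (\<lambda>l z. l (y + z)) (directed_net Bset) (directed_net (Bset :: ('g::topological_group_add \<Rightarrow> real) set))"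
  unfolding filterlim_iff eventually_Bset_net
proof (intro allI impI, elim bexE)
  fix P and b :: "'g \<Rightarrow> real" assume "b \<in> Bset" "\<forall>l\<in>Bset. b \<le> l \<longrightarrow> P l"
  moreover have "b \<le> (\<lambda>z. l (y + z))" if "(\<lambda>z. b (- y + z)) \<le> l" for l
    using that unfolding le_fun_def by (metis add.assoc add.left_inverse add_0)
  ultimately show "\<exists>l0\<in>Bset. \<forall>l\<in>Bset. l0 \<le> l \<longrightarrow> P (\<lambda>z. l (y + z))"
    using Bset_translate by blast
qed

lemma strict_limit_act_invariant:
  fixes \<mu> :: "'g::{topological_group_add,t2_space} measure" and act :: "'g \<Rightarrow> 'm::t2_space \<Rightarrow> 'm"
  assumes haar: "left_haar_measure \<mu>" and act: "continuous_action act"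
    and LC: "locally_compact_space (euclidean :: 'm topology)"
    and u: "u \<in> Cb" and limit: "strict_conv (\<lambda>l. p_lam \<mu> act l u) h"
  shows "h (act (- y) m) = h m"
proof -
  have "((\<lambda>l. p_lam \<mu> act l u m) \<longlongrightarrow> h m) (directed_net Bset)"
    by (rule strict_conv_tendsto[OF LC limit])
  then have "((\<lambda>l. p_lam \<mu> act (\<lambda>z. l (- y + z)) u m) \<longlongrightarrow> h m) (directed_net Bset)"
    by (rule filterlim_compose[OF _ filterlim_Bset_translate])
  moreover have "p_lam \<mu> act l u (act (- y) m) = p_lam \<mu> act (\<lambda>z. l (- y + z)) u m" if "l \<in> Bset" for l
    using p_lam_act[OF haar act that] u unfolding Cb_def by blast
  then have "eventually (\<lambda>l. p_lam \<mu> act l u (act (- y) m) = p_lam \<mu> act (\<lambda>z. l (- y + z)) u m)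
      (directed_net Bset)"
    using eventually_in_directed_net[OF directed_Bset] by (rule eventually_mono[rotated])
  ultimately have "((\<lambda>l. p_lam \<mu> act l u (act (- y) m)) \<longlongrightarrow> h m) (directed_net Bset)"
    by (subst tendsto_cong) auto
  then show ?thesis
    by (rule tendsto_unique[OF directed_net_neq_bot[OF directed_Bset] strict_conv_tendsto[OF LC limit]])
qed

lemma p_lam_dominated_gap:
  fixes \<mu> :: "'g::{topological_group_add,t2_space} measure" and act :: "'g \<Rightarrow> 'm::t2_space \<Rightarrow> 'm"
    and C D :: "'m \<Rightarrow> real"
  assumes haar: "left_haar_measure \<mu>" and act: "continuous_action act"
    and LC: "locally_compact_space (euclidean :: 'm topology)"
    and C: "(\<lambda>m. complex_of_real (C m)) \<in> Cb" and D: "(\<lambda>m. complex_of_real (D m)) \<in> Cb"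
    and D_nonneg: "\<And>m. 0 \<le> D m" and D_le_C: "\<And>m. D m \<le> C m"
    and limit: "strict_conv (\<lambda>l. p_lam \<mu> act l (\<lambda>m. complex_of_real (C m))) hC"
  obtains S where
    "\<And>l m. l \<in> Bset \<Longrightarrow> norm (p_lam \<mu> act l (\<lambda>m. complex_of_real (D m)) m - complex_of_real (S m))
        \<le> norm (p_lam \<mu> act l (\<lambda>m. complex_of_real (C m)) m - hC m)"
    "\<And>m. 0 \<le> S m" "\<And>m. S m \<le> Re (hC m)"
proof -
  define E where "E m = C m - D m" for m
  have E: "(\<lambda>m. complex_of_real (E m)) \<in> Cb"
    using Cb_linear_combination[OF D C, of "- 1"] by (simp add: E_def)
  define P where "P l m = (LINT x|\<mu>. l x * D (act (- x) m))" for l m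
  define Q where "Q l m = (LINT x|\<mu>. l x * E (act (- x) m))" for l m
  define S where "S m = (SUP l\<in>Bset. P l m)" for m
  have sum: "P l m + Q l m = Re (p_lam \<mu> act l (\<lambda>m. complex_of_real (C m)) m)" if "l \<in> Bset" for l m
    unfolding P_def Q_def p_lam_of_real E_def
    using integrable_p_lam_integrand_real[OF haar act that D] integrable_p_lam_integrand_real[OF haar act that E]
    by (simp add: E_def algebra_simps flip: Bochner_Integration.integral_add)
  have Re_limit: "((\<lambda>l. Re (p_lam \<mu> act l (\<lambda>m. complex_of_real (C m)) m)) \<longlongrightarrow> Re (hC m))
      (directed_net Bset)" for m
    by (intro tendsto_Re strict_conv_tendsto[OF LC limit])
  have ev: "eventually (\<lambda>l. Re (p_lam \<mu> act l (\<lambda>m. complex_of_real (C m)) m) = P l m + Q l m)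
      (directed_net Bset)" for m
    using eventually_in_directed_net[OF directed_Bset] by (rule eventually_mono) (simp add: sum)
  have "((\<lambda>l. P l m + Q l m) \<longlongrightarrow> Re (hC m)) (directed_net Bset)" for m
    by (rule tendsto_cong[OF ev, THEN iffD1, OF Re_limit])
  moreover have "mono_on Bset (\<lambda>l. P l m)" for m
    unfolding P_def by (rule mono_on_Bset_integral[OF haar act D D_nonneg])
  moreover have "mono_on Bset (\<lambda>l. Q l m)" for m
    unfolding Q_def by (rule mono_on_Bset_integral[OF haar act E]) (simp add: E_def D_le_C)
  ultimately have S_bounds: "P l m \<le> S m" "S m \<le> Re (hC m) - Q l m" if "l \<in> Bset" for l m
    unfolding S_def using SUP_bounds_of_mono_on_sum[OF directed_Bset _ _ _ that] by blast+
  show thesis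
  proof
    fix l :: "'g \<Rightarrow> real" and m assume "l \<in> Bset"
    have "norm (p_lam \<mu> act l (\<lambda>m. complex_of_real (D m)) m - complex_of_real (S m)) = \<bar>P l m - S m\<bar>"
      unfolding p_lam_of_real P_def by (simp flip: of_real_diff)
    also have "\<dots> \<le> \<bar>Re (p_lam \<mu> act l (\<lambda>m. complex_of_real (C m)) m - hC m)\<bar>"
      using S_bounds[OF \<open>l \<in> Bset\<close>, of m] sum[OF \<open>l \<in> Bset\<close>, of m] by simp
    also have "\<dots> \<le> norm (p_lam \<mu> act l (\<lambda>m. complex_of_real (C m)) m - hC m)"
      by (rule abs_Re_le_cmod)
    finally show "norm (p_lam \<mu> act l (\<lambda>m. complex_of_real (D m)) m - complex_of_real (S m))
        \<le> norm (p_lam \<mu> act l (\<lambda>m. complex_of_real (C m)) m - hC m)" .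
  next
    fix m
    show "0 \<le> S m" "S m \<le> Re (hC m)"
      using S_bounds[OF zero_in_Bset, of m] by (simp_all add: P_def Q_def)
  qed
qed

lemma strict_limit_of_dominated:
  fixes \<mu> :: "'g::{topological_group_add,t2_space} measure" and act :: "'g \<Rightarrow> 'm::t2_space \<Rightarrow> 'm"
    and C D :: "'m \<Rightarrow> real"
  assumes haar: "left_haar_measure \<mu>" and act: "continuous_action act"
    and LC: "locally_compact_space (euclidean :: 'm topology)"
    and C: "(\<lambda>m. complex_of_real (C m)) \<in> Cb" and D: "(\<lambda>m. complex_of_real (D m)) \<in> Cb"
    and "\<And>m. 0 \<le> D m" "\<And>m. D m \<le> C m"
    and hC: "hC \<in> Cb" "strict_conv (\<lambda>l. p_lam \<mu> act l (\<lambda>m. complex_of_real (C m))) hC"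
  shows "\<exists>hD\<in>Cb. strict_conv (\<lambda>l. p_lam \<mu> act l (\<lambda>m. complex_of_real (D m))) hD"
proof -
  obtain S where gap:
    "\<And>l m. l \<in> Bset \<Longrightarrow> norm (p_lam \<mu> act l (\<lambda>m. complex_of_real (D m)) m - complex_of_real (S m))
        \<le> norm (p_lam \<mu> act l (\<lambda>m. complex_of_real (C m)) m - hC m)"
    and S_bounds: "\<And>m. 0 \<le> S m" "\<And>m. S m \<le> Re (hC m)"
    using p_lam_dominated_gap[OF assms(1-7) hC(2)] by blast
  have limit: "strict_conv (\<lambda>l. p_lam \<mu> act l (\<lambda>m. complex_of_real (D m))) (\<lambda>m. complex_of_real (S m))"
    by (rule strict_conv_dominated[OF hC(2) gap])
  have "continuous_on UNIV (\<lambda>m. complex_of_real (S m))"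
    by (rule continuous_on_strict_limit[OF LC limit continuous_on_p_lam[OF haar act _ D]])
  moreover obtain B where "\<And>m. norm (hC m) \<le> B" using Cb_bound[OF hC(1)] by blast
  then have "norm (complex_of_real (S m)) \<le> B" for m
    using S_bounds[of m] abs_Re_le_cmod[of "hC m"] by (simp add: abs_le_iff) (smt (verit))
  ultimately show ?thesis using limit unfolding Cb_def by blast
qed

section \<open>Elements whose strict limit vanishes off saturations of compact sets\<close>

text \<open>\<open>(h \<longlongrightarrow> 0) (off_saturations act)\<close> says that \<open>h\<close> vanishes at infinity on the orbit
  space: for every \<open>e > 0\<close>, \<open>|h| < e\<close> off the saturation \<open>G\<cdot>S\<close> of some compact \<open>S\<close>.\<close>
definition off_saturations :: "('g \<Rightarrow> 'm \<Rightarrow> 'm) \<Rightarrow> 'm::topological_space filter" where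
  "off_saturations act = (INF S\<in>{S. compact S}. principal {m. orbit act m \<inter> S = {}})"

lemma eventually_off_saturations:
  "eventually P (off_saturations act) \<longleftrightarrow> (\<exists>S. compact S \<and> (\<forall>m. orbit act m \<inter> S = {} \<longrightarrow> P m))"
  unfolding off_saturations_def
proof (subst eventually_INF_base)
  show "\<exists>S\<in>{S. compact S}. principal {m. orbit act m \<inter> S = {}}
      \<le> inf (principal {m. orbit act m \<inter> S1 = {}}) (principal {m. orbit act m \<inter> S2 = {}})"
    if "S1 \<in> {S. compact S}" "S2 \<in> {S. compact S}" for S1 S2
    using that by (intro bexI[of _ "S1 \<union> S2"]) (auto simp: inf_principal)
qed (auto simp: eventually_principal)

definition has_vanishing_strict_limit ::
    "'g::{topological_group_add,t2_space} measure \<Rightarrow> ('g \<Rightarrow> 'm \<Rightarrow> 'm) \<Rightarrow> ('m::topological_space \<Rightarrow> complex) \<Rightarrow> bool"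
  where "has_vanishing_strict_limit \<mu> act u \<longleftrightarrow>
    u \<in> Cb \<and> (\<exists>h\<in>Cb. strict_conv (\<lambda>l. p_lam \<mu> act l u) h \<and> (h \<longlongrightarrow> 0) (off_saturations act))"

lemma has_vanishing_strict_limit_zero: "has_vanishing_strict_limit \<mu> act (\<lambda>m. 0)"
proof -
  have "strict_conv (\<lambda>l. p_lam \<mu> act l (\<lambda>m. 0)) (\<lambda>m. 0)"
    unfolding strict_conv_def p_lam_def alpha_def using zero_in_Bset by auto
  moreover have "(\<lambda>m. 0) \<in> Cb" unfolding Cb_def by auto
  ultimately show ?thesis unfolding has_vanishing_strict_limit_def by (blast intro: tendsto_const)
qed

lemma has_vanishing_strict_limit_linear_combination:
  fixes \<mu> :: "'g::{topological_group_add,t2_space} measure" and act :: "'g \<Rightarrow> 'm::t2_space \<Rightarrow> 'm"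
  assumes haar: "left_haar_measure \<mu>" and act: "continuous_action act"
    and "has_vanishing_strict_limit \<mu> act u" "has_vanishing_strict_limit \<mu> act v"
  shows "has_vanishing_strict_limit \<mu> act (\<lambda>m. c * u m + v m)"
proof -
  obtain hu hv where u: "u \<in> Cb" "hu \<in> Cb" "strict_conv (\<lambda>l. p_lam \<mu> act l u) hu" "(hu \<longlongrightarrow> 0) (off_saturations act)"
    and v: "v \<in> Cb" "hv \<in> Cb" "strict_conv (\<lambda>l. p_lam \<mu> act l v) hv" "(hv \<longlongrightarrow> 0) (off_saturations act)"
    using assms(3,4) unfolding has_vanishing_strict_limit_def by blast
  have "strict_conv (\<lambda>l m. c * p_lam \<mu> act l u m + p_lam \<mu> act l v m) (\<lambda>m. c * hu m + hv m)"
    by (rule strict_conv_linear_combination[OF u(3) v(3)])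
  then have "strict_conv (\<lambda>l. p_lam \<mu> act l (\<lambda>m. c * u m + v m)) (\<lambda>m. c * hu m + hv m)"
    by (subst strict_conv_cong) (auto simp: p_lam_linear_combination[OF haar act _ u(1) v(1)])
  moreover have "((\<lambda>m. c * hu m + hv m) \<longlongrightarrow> 0) (off_saturations act)"
    using tendsto_add[OF tendsto_mult_right_zero[OF u(4)] v(4)] by simp
  ultimately show ?thesis unfolding has_vanishing_strict_limit_def
    using Cb_linear_combination[OF u(1) v(1)] Cb_linear_combination[OF u(2) v(2)] by blast
qed

lemma has_vanishing_strict_limit_sum:
  fixes \<mu> :: "'g::{topological_group_add,t2_space} measure" and act :: "'g \<Rightarrow> 'm::t2_space \<Rightarrow> 'm"
  assumes "left_haar_measure \<mu>" "continuous_action act"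
    and "finite I" "\<And>i. i \<in> I \<Longrightarrow> has_vanishing_strict_limit \<mu> act (F i)"
  shows "has_vanishing_strict_limit \<mu> act (\<lambda>m. \<Sum>i\<in>I. c i * F i m)"
  using assms(3,4)
proof (induction I rule: finite_induct)
  case empty
  then show ?case using has_vanishing_strict_limit_zero by simp
next
  case (insert i I)
  then show ?case
    using has_vanishing_strict_limit_linear_combination[OF assms(1,2), of "F i" "\<lambda>m. \<Sum>i\<in>I. c i * F i m" "c i"]
    by simp
qed

lemma alpha_proper_elt_real:
  assumes "alpha_proper_elt \<mu> act a"
  obtains A where "a = (\<lambda>m. complex_of_real (A m))" "\<And>m. 0 \<le> A m"
proof
  have "a m \<in> \<real>" "0 \<le> Re (a m)" for m using assms unfolding alpha_proper_elt_def by auto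
  then show "a = (\<lambda>m. complex_of_real (Re (a m)))" "0 \<le> Re (a m)" for m
    by (auto simp: complex_is_Real_iff complex_eq_iff)
qed

lemma p_lam_scale: "p_lam \<mu> act l (\<lambda>m. c * u m) m = c * p_lam \<mu> act l u m"
  unfolding p_lam_def alpha_def by (simp add: mult.left_commute)

lemma strict_conv_scale:
  fixes net :: "('g::topological_space \<Rightarrow> real) \<Rightarrow> 'm::topological_space \<Rightarrow> complex"
  assumes "strict_conv net h"
  shows "strict_conv (\<lambda>l m. c * net l m) (\<lambda>m. c * h m)"
  unfolding strict_conv_iff_uniform_limit
proof
  fix a :: "'m \<Rightarrow> complex" assume "a \<in> C0"
  then have "uniform_limit UNIV (\<lambda>l m. c * (net l m * a m)) (\<lambda>m. c * (h m * a m)) (directed_net Bset)"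
    using assms unfolding strict_conv_iff_uniform_limit
    by (intro bounded_linear.uniform_limit[OF bounded_linear_mult_right]) auto
  then show "uniform_limit UNIV (\<lambda>l m. c * net l m * a m) (\<lambda>m. c * h m * a m) (directed_net Bset)"
    by (simp add: mult.assoc)
qed

lemma norm_strict_limit_mult_le:
  fixes \<mu> :: "'g::{topological_group_add,t2_space} measure" and act :: "'g \<Rightarrow> 'm::t2_space \<Rightarrow> 'm"
    and A B :: "'m \<Rightarrow> real"
  assumes haar: "left_haar_measure \<mu>" and act: "continuous_action act"
    and LC: "locally_compact_space (euclidean :: 'm topology)"
    and AB: "(\<lambda>m. complex_of_real (A m * B m)) \<in> Cb" and B: "(\<lambda>m. complex_of_real (B m)) \<in> Cb"
    and nonneg: "\<And>m. 0 \<le> A m" "\<And>m. 0 \<le> B m" and small: "\<And>x. A (act x m) \<le> \<delta>"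
    and hAB: "strict_conv (\<lambda>l. p_lam \<mu> act l (\<lambda>m. complex_of_real (A m * B m))) hAB"
    and hB: "strict_conv (\<lambda>l. p_lam \<mu> act l (\<lambda>m. complex_of_real (B m))) hB"
  shows "norm (hAB m) \<le> \<delta> * norm (hB m)"
proof (rule tendsto_le[OF directed_net_neq_bot[OF directed_Bset]])
  show "((\<lambda>l. \<delta> * norm (p_lam \<mu> act l (\<lambda>m. complex_of_real (B m)) m)) \<longlongrightarrow> \<delta> * norm (hB m))
      (directed_net Bset)"
    by (intro tendsto_mult_left tendsto_norm strict_conv_tendsto[OF LC hB])
  show "((\<lambda>l. norm (p_lam \<mu> act l (\<lambda>m. complex_of_real (A m * B m)) m)) \<longlongrightarrow> norm (hAB m))
      (directed_net Bset)"
    by (intro tendsto_norm strict_conv_tendsto[OF LC hAB])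
  have "norm (p_lam \<mu> act l (\<lambda>m. complex_of_real (A m * B m)) m)
      \<le> \<delta> * norm (p_lam \<mu> act l (\<lambda>m. complex_of_real (B m)) m)" if l: "l \<in> Bset" for l
  proof -
    have l_nonneg: "0 \<le> l x" for x using l unfolding Bset_def by blast
    have "l x * (A (act (- x) m) * B (act (- x) m)) \<le> l x * (\<delta> * B (act (- x) m))" for x
      using small nonneg l_nonneg by (intro mult_left_mono mult_right_mono) auto
    then have "(LINT x|\<mu>. l x * (A (act (- x) m) * B (act (- x) m))) \<le> (LINT x|\<mu>. \<delta> * (l x * B (act (- x) m)))"
      using integrable_p_lam_integrand_real[OF haar act l AB] integrable_p_lam_integrand_real[OF haar act l B]
      by (intro integral_mono) (auto simp: mult.left_commute)
    moreover have "0 \<le> (LINT x|\<mu>. l x * (A (act (- x) m) * B (act (- x) m)))"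
      using l_nonneg nonneg by (intro Bochner_Integration.integral_nonneg) simp
    moreover have "0 \<le> (LINT x|\<mu>. l x * B (act (- x) m))"
      using l_nonneg nonneg by (intro Bochner_Integration.integral_nonneg) simp
    ultimately show ?thesis unfolding p_lam_of_real by simp
  qed
  then show "eventually (\<lambda>l. norm (p_lam \<mu> act l (\<lambda>m. complex_of_real (A m * B m)) m)
      \<le> \<delta> * norm (p_lam \<mu> act l (\<lambda>m. complex_of_real (B m)) m)) (directed_net Bset)"
    using eventually_in_directed_net[OF directed_Bset] by (rule eventually_mono[rotated])
qed

lemma strict_limit_mult_tendsto_zero:
  fixes \<mu> :: "'g::{topological_group_add,t2_space} measure" and act :: "'g \<Rightarrow> 'm::t2_space \<Rightarrow> 'm"
    and A B :: "'m \<Rightarrow> real"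
  assumes haar: "left_haar_measure \<mu>" and act: "continuous_action act"
    and LC: "locally_compact_space (euclidean :: 'm topology)"
    and A: "(\<lambda>m. complex_of_real (A m)) \<in> C0" and B: "(\<lambda>m. complex_of_real (B m)) \<in> Cb"
    and AB: "(\<lambda>m. complex_of_real (A m * B m)) \<in> Cb"
    and nonneg: "\<And>m. 0 \<le> A m" "\<And>m. 0 \<le> B m"
    and hB: "hB \<in> Cb" "strict_conv (\<lambda>l. p_lam \<mu> act l (\<lambda>m. complex_of_real (B m))) hB"
    and hAB: "strict_conv (\<lambda>l. p_lam \<mu> act l (\<lambda>m. complex_of_real (A m * B m))) hAB"
  shows "(hAB \<longlongrightarrow> 0) (off_saturations act)"
proof (rule tendstoI)
  fix e :: real assume "0 < e"
  obtain \<beta> where \<beta>: "0 \<le> \<beta>" "\<And>m. norm (hB m) \<le> \<beta>" using Cb_bound[OF hB(1)] by blast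
  define \<delta> where "\<delta> = e / (\<beta> + 1)"
  have \<delta>: "0 < \<delta>" "\<delta> * \<beta> < e" unfolding \<delta>_def using \<open>0 < e\<close> \<beta>(1) by (simp_all add: field_simps)
  obtain K where K: "compact K" "\<And>m. m \<notin> K \<Longrightarrow> norm (complex_of_real (A m)) < \<delta>"
    using A \<delta>(1) unfolding C0_iff by blast
  have "continuous_on UNIV (\<lambda>m. Re (complex_of_real (A m)))"
    using A unfolding C0_iff by (intro continuous_intros) auto
  then have "closed {m. \<delta> \<le> A m}" by (intro closed_Collect_le continuous_on_const) auto
  then have "compact (K \<inter> {m. \<delta> \<le> A m})" by (rule compact_Int_closed[OF K(1)])
  moreover have "norm (hAB m) < e" if "orbit act m \<inter> (K \<inter> {m. \<delta> \<le> A m}) = {}" for m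
  proof -
    have "A (act x m) \<le> \<delta>" for x
      using that K(2)[of "act x m"] nonneg(1)[of "act x m"] unfolding orbit_def by force
    then have "norm (hAB m) \<le> \<delta> * norm (hB m)"
      by (rule norm_strict_limit_mult_le[OF haar act LC AB B nonneg _ hAB hB(2)])
    also have "\<dots> \<le> \<delta> * \<beta>" using \<beta>(2) \<delta>(1) by (simp add: mult_left_mono)
    finally show ?thesis using \<delta>(2) by simp
  qed
  ultimately show "eventually (\<lambda>m. dist (hAB m) 0 < e) (off_saturations act)"
    unfolding eventually_off_saturations by auto
qed

lemma alpha_proper_elt_mult_has_vanishing_strict_limit:
  fixes \<mu> :: "'g::{topological_group_add,t2_space} measure" and act :: "'g \<Rightarrow> 'm::t2_space \<Rightarrow> 'm"
  assumes haar: "left_haar_measure \<mu>" and act: "continuous_action act"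
    and LC: "locally_compact_space (euclidean :: 'm topology)"
    and a: "alpha_proper_elt \<mu> act a" and b: "alpha_proper_elt \<mu> act b"
  shows "has_vanishing_strict_limit \<mu> act (\<lambda>m. a m * b m)"
proof -
  obtain A B where AB_def: "a = (\<lambda>m. complex_of_real (A m))" "b = (\<lambda>m. complex_of_real (B m))"
    and nonneg: "\<And>m. 0 \<le> A m" "\<And>m. 0 \<le> B m"
    using alpha_proper_elt_real[OF a] alpha_proper_elt_real[OF b] by metis
  obtain hA hB where A: "a \<in> C0" "hA \<in> Cb" "strict_conv (\<lambda>l. p_lam \<mu> act l a) hA"
    and B: "b \<in> C0" "hB \<in> Cb" "strict_conv (\<lambda>l. p_lam \<mu> act l b) hB"
    using a b unfolding alpha_proper_elt_def by blast
  obtain \<beta> where "\<And>m. norm (b m) \<le> \<beta>" using Cb_bound[OF C0_imp_Cb[OF B(1)]] by blast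
  then have B_le: "B m \<le> \<beta>" for m by (metis AB_def(2) abs_le_D1 norm_of_real)
  have const: "(\<lambda>m. complex_of_real \<beta>) \<in> Cb" unfolding Cb_def by auto
  have AB: "(\<lambda>m. complex_of_real (A m * B m)) \<in> Cb"
    using Cb_mult[OF C0_imp_Cb[OF A(1)] C0_imp_Cb[OF B(1)]] by (simp add: AB_def)
  have C: "(\<lambda>m. complex_of_real (\<beta> * A m)) \<in> Cb"
    using Cb_mult[OF const C0_imp_Cb[OF A(1)]] by (simp add: AB_def)
  have "p_lam \<mu> act l (\<lambda>m. complex_of_real (\<beta> * A m)) = (\<lambda>m. \<beta> * p_lam \<mu> act l a m)" for l
    unfolding of_real_mult AB_def by (rule ext) (rule p_lam_scale)
  then have hC: "strict_conv (\<lambda>l. p_lam \<mu> act l (\<lambda>m. complex_of_real (\<beta> * A m))) (\<lambda>m. \<beta> * hA m)"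
    using strict_conv_scale[OF A(3), of \<beta>] by simp
  have "(\<lambda>m. \<beta> * hA m) \<in> Cb" using Cb_mult[OF const A(2)] by simp
  moreover have "0 \<le> A m * B m" "A m * B m \<le> \<beta> * A m" for m
    using nonneg[of m] B_le[of m] by (simp_all add: mult.commute[of \<beta>] mult_left_mono)
  ultimately obtain hAB where hAB: "hAB \<in> Cb"
    "strict_conv (\<lambda>l. p_lam \<mu> act l (\<lambda>m. complex_of_real (A m * B m))) hAB"
    using strict_limit_of_dominated[OF haar act LC C AB _ _ _ hC] by blast
  moreover have "(hAB \<longlongrightarrow> 0) (off_saturations act)"
    using strict_limit_mult_tendsto_zero[OF haar act LC _ _ AB nonneg _ _ hAB(2)] A(1) C0_imp_Cb[OF B(1)] B(2,3)
    by (simp add: AB_def)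
  ultimately show ?thesis unfolding has_vanishing_strict_limit_def using AB by (auto simp: AB_def)
qed

section \<open>The orbit space\<close>

lemma openin_orbit_space:
  "openin (orbit_space act) U \<longleftrightarrow> U \<subseteq> range (orbit act) \<and> open {m. orbit act m \<in> U}"
proof -
  have "{m. orbit act m \<in> S \<inter> T} = {m. orbit act m \<in> S} \<inter> {m. orbit act m \<in> T}"
    "{m. orbit act m \<in> \<Union>K} = (\<Union>S\<in>K. {m. orbit act m \<in> S})" for S T K
    by auto
  then have "istopology (\<lambda>U. U \<subseteq> range (orbit act) \<and> open {m. orbit act m \<in> U})"
    unfolding istopology_def by (auto intro!: open_Int open_UN)
  then show ?thesis unfolding orbit_space_def by (simp add: topology_inverse')
qed

lemma topspace_orbit_space: "topspace (orbit_space act) = range (orbit act)"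
proof (rule antisym)
  show "topspace (orbit_space act) \<subseteq> range (orbit act)"
    using openin_orbit_space[of act "topspace (orbit_space act)"] by simp
  show "range (orbit act) \<subseteq> topspace (orbit_space act)"
    by (rule openin_subset) (simp add: openin_orbit_space)
qed

lemma quotient_map_orbit: "quotient_map euclidean (orbit_space act) (orbit act)"
  unfolding quotient_map_def topspace_orbit_space
proof (intro conjI allI impI)
  fix U assume "U \<subseteq> range (orbit act)"
  then show "openin euclidean {m \<in> topspace euclidean. orbit act m \<in> U} \<longleftrightarrow> openin (orbit_space act) U"
    by (simp add: openin_orbit_space)
qed simp

lemma orbit_act:
  assumes "continuous_action act" shows "orbit act (act x m) = orbit act m"
proof -
  have act_add: "act (y + z) m = act y (act z m)" for y z using assms unfolding continuous_action_def
    by blast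
  have "act y m \<in> range (\<lambda>z. act z (act x m))" for y
    by (rule image_eqI[of _ _ "y + - x"]) (simp_all add: act_add[symmetric] add.assoc)
  moreover have "act z (act x m) \<in> range (\<lambda>y. act y m)" for z
    by (simp add: act_add[symmetric])
  ultimately show ?thesis unfolding orbit_def by blast
qed

lemma on_orbits_orbit:
  assumes "continuous_action act" "\<And>x m. h (act x m) = h m"
  shows "on_orbits h (orbit act m) = h m"
proof -
  have "m \<in> orbit act m" using assms(1) unfolding orbit_def continuous_action_def by (metis rangeI)
  then have "(SOME m'. m' \<in> orbit act m) \<in> orbit act m" by (rule someI)
  then show ?thesis unfolding on_orbits_def orbit_def using assms(2) by auto
qed

lemma on_orbits_in_C0_on:
  fixes act :: "'g::topological_group_add \<Rightarrow> 'm::topological_space \<Rightarrow> 'm"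
  assumes act: "continuous_action act" and h: "continuous_on UNIV h" and inv: "\<And>x m. h (act x m) = h m"
    and vanishing: "(h \<longlongrightarrow> 0) (off_saturations act)"
  shows "on_orbits h \<in> C0_on (orbit_space act)"
proof -
  have orbit_eq: "on_orbits h (orbit act m) = h m" for m by (rule on_orbits_orbit[where h = h, OF act inv])
  then have "on_orbits h \<circ> orbit act = h" by auto
  then have "continuous_map euclidean euclidean (on_orbits h \<circ> orbit act)"
    using h by (simp add: continuous_map_iff_continuous2)
  then have "continuous_map (orbit_space act) euclidean (on_orbits h)"
    by (rule continuous_compose_quotient_map[OF quotient_map_orbit])
  moreover have "\<exists>K. compactin (orbit_space act) K \<and> (\<forall>y\<in>topspace (orbit_space act) - K. norm (on_orbits h y) < e)"
    if "0 < e" for e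
  proof -
    have "eventually (\<lambda>m. dist (h m) 0 < e) (off_saturations act)" by (rule tendstoD[OF vanishing \<open>0 < e\<close>])
    then obtain S where S: "compact S" "\<And>m. orbit act m \<inter> S = {} \<Longrightarrow> norm (h m) < e"
      unfolding eventually_off_saturations by auto
    have "compactin (orbit_space act) (orbit act ` S)"
      using S(1) quotient_imp_continuous_map[OF quotient_map_orbit]
      by (intro image_compactin) (auto simp: compactin_euclidean_iff)
    moreover have "norm (on_orbits h (orbit act m)) < e" if "orbit act m \<notin> orbit act ` S" for m
    proof -
      have "orbit act m \<inter> S = {}"
      proof (rule ccontr)
        assume "orbit act m \<inter> S \<noteq> {}"
        then obtain x where "act x m \<in> S" unfolding orbit_def by blast
        then have "orbit act m \<in> orbit act ` S" unfolding orbit_act[OF act, of x m, symmetric]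
          by (rule imageI)
        with that show False by blast
      qed
      then show ?thesis using S(2) orbit_eq by simp
    qed
    ultimately show ?thesis unfolding topspace_orbit_space by blast
  qed
  ultimately show ?thesis unfolding C0_on_def by blast
qed

lemma psi_alpha_eqI:
  fixes h :: "'m::t2_space \<Rightarrow> complex"
  assumes "locally_compact_space (euclidean :: 'm topology)"
    and "h \<in> Cb" "strict_conv (\<lambda>l. p_lam \<mu> act l u) h"
  shows "psi_alpha \<mu> act u = h"
  unfolding psi_alpha_def using assms strict_conv_unique by blast

lemma P_alpha_cnj_mult_has_vanishing_strict_limit:
  fixes \<mu> :: "'g::{topological_group_add,t2_space} measure" and act :: "'g \<Rightarrow> 'm::t2_space \<Rightarrow> 'm"
  assumes haar: "left_haar_measure \<mu>" and act: "continuous_action act"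
    and LC: "locally_compact_space (euclidean :: 'm topology)"
    and "f \<in> P_alpha \<mu> act" "g \<in> P_alpha \<mu> act"
  shows "has_vanishing_strict_limit \<mu> act (\<lambda>m. cnj (f m) * g m)"
proof -
  obtain n and c :: "nat \<Rightarrow> complex" and a :: "nat \<Rightarrow> 'm \<Rightarrow> complex"
    where a: "\<forall>i<n. alpha_proper_elt \<mu> act (a i)" and f: "f = (\<lambda>m. \<Sum>i<n. c i * a i m)"
    using assms(4) unfolding P_alpha_def by blast
  obtain k and d :: "nat \<Rightarrow> complex" and b :: "nat \<Rightarrow> 'm \<Rightarrow> complex"
    where b: "\<forall>j<k. alpha_proper_elt \<mu> act (b j)" and g: "g = (\<lambda>m. \<Sum>j<k. d j * b j m)"
    using assms(5) unfolding P_alpha_def by blast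
  have "cnj (a i m) = a i m" if "i < n" for i m
    using a that unfolding alpha_proper_elt_def by (simp add: Reals_cnj_iff)
  then have "cnj (f m) = (\<Sum>i<n. cnj (c i) * a i m)" for m unfolding f by simp
  then have "cnj (f m) * g m = (\<Sum>i<n. \<Sum>j<k. cnj (c i) * a i m * (d j * b j m))" for m
    unfolding g by (simp add: sum_product)
  then have "cnj (f m) * g m
      = (\<Sum>p\<in>{..<n} \<times> {..<k}. (cnj (c (fst p)) * d (snd p)) * (a (fst p) m * b (snd p) m))" for m
    by (simp add: sum.cartesian_product' mult_ac)
  moreover have "has_vanishing_strict_limit \<mu> act (\<lambda>m. \<Sum>p\<in>{..<n} \<times> {..<k}.
      (cnj (c (fst p)) * d (snd p)) * (a (fst p) m * b (snd p) m))"
    using a b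
    by (intro has_vanishing_strict_limit_sum[OF haar act]
        alpha_proper_elt_mult_has_vanishing_strict_limit[OF haar act LC]) auto
  ultimately show ?thesis by simp
qed

theorem proposition6p5:
  fixes \<mu> :: "'g::{topological_group_add,t2_space} measure"
    and act :: "'g \<Rightarrow> 'm::t2_space \<Rightarrow> 'm"
    and f g :: "'m \<Rightarrow> complex"
  assumes "locally_compact_space (euclidean :: 'g topology)"
    and "left_haar_measure \<mu>"
    and "locally_compact_space (euclidean :: 'm topology)"
    and "continuous_action act"
    and "proper_action \<mu> act"
    and "f \<in> P_alpha \<mu> act" and "g \<in> P_alpha \<mu> act"
  shows "psi_alpha \<mu> act (\<lambda>m. cnj (f m) * g m) \<in> Cb
    \<and> strict_conv (\<lambda>l. p_lam \<mu> act l (\<lambda>m. cnj (f m) * g m)) (psi_alpha \<mu> act (\<lambda>m. cnj (f m) * g m))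
    \<and> alpha_invariant act (psi_alpha \<mu> act (\<lambda>m. cnj (f m) * g m))
    \<and> on_orbits (psi_alpha \<mu> act (\<lambda>m. cnj (f m) * g m)) \<in> C0_on (orbit_space act)"
proof -
  note haar = assms(2) and LC = assms(3) and act = assms(4)
  obtain h where u: "(\<lambda>m. cnj (f m) * g m) \<in> Cb" and h: "h \<in> Cb"
    "strict_conv (\<lambda>l. p_lam \<mu> act l (\<lambda>m. cnj (f m) * g m)) h" "(h \<longlongrightarrow> 0) (off_saturations act)"
    using P_alpha_cnj_mult_has_vanishing_strict_limit[OF haar act LC assms(6,7)]
    unfolding has_vanishing_strict_limit_def by blast
  have invariant: "h (act (- y) m) = h m" for y m
    by (rule strict_limit_act_invariant[OF haar act LC u h(2)])
  then have "h (act y m) = h m" for y m by (metis minus_minus)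
  then have "on_orbits h \<in> C0_on (orbit_space act)"
    using on_orbits_in_C0_on[OF act _ _ h(3)] h(1) unfolding Cb_def by blast
  moreover have "alpha_invariant act h"
    unfolding alpha_invariant_def alpha_def using invariant by simp
  ultimately show ?thesis using psi_alpha_eqI[OF LC h(1,2)] h(1,2) by simp
qed

end
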